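(* Let $D\subseteq\mathbb{R}^{p+2}$ be an open set invariant under $(\mathbf{x}_p,r)\mapsto(\mathbf{x}_p,-r)$ and let $f(\mathbf{x})=F_1(\mathbf{x}')+\underline{\omega}F_2(\mathbf{x}')$ be a generalized partial-slice function on $\Omega_D$ induced by a $C^2$ stem function $(F_1,F_2)$, with $f\in C^2(\Omega_D,\mathbb{A})$. Then for all $\mathbf{x}=\mathbf{x}_p+r\underline{\omega}\in\Omega_D$, $$\Delta_{\mathbf{x}}f(\mathbf{x})=\Delta_{\mathbf{x}'}F_1(\mathbf{x}')+\underline{\omega}\Delta_{\mathbf{x}'}F_2(\mathbf{x}')+(q-1)\Big(\big(\tfrac1r\partial_r\big)F_1(\mathbf{x}')+\underline{\omega}\big(\partial_r\tfrac1r\big)F_2(\mathbf{x}')\Big),$$ where $\Delta_{\mathbf{x}'}=\Delta_{\mathbf{x}_p}+\partial_r^2$, and at points $\mathbf{x}'=(\mathbf{x}_p,0)\in D$ the values of $(\frac1r\partial_r)F_1$ and $(\partial_r\frac1r)F_2$ are meant as $\lim_{r\to0}(\frac1r\partial_r)F_1(\mathbf{x}')=\partial_r^2F_1(\mathbf{x}_p,0)$ and $\lim_{r\to0}(\partial_r\frac1r)F_2(\mathbf{x}')=\frac12\partial_r^2F_2(\mathbf{x}_p,0)$.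
   Context: Let $\mathbb{A}$ be a real alternative algebra (the associator $[a,b,c]=(ab)c-a(bc)$ is an alternating trilinear function) with unity $1$, of finite real dimension $d>1$, equipped with an anti-involution $a\mapsto a^c$ (real linear, $a^c=a$ for real $a$, $(a^c)^c=a$, $(ab)^c=b^ca^c$). Let $t(x)=x+x^c$, $n(x)=xx^c$, $\mathbb{S}_{\mathbb{A}}=\{x: t(x)=0,\ n(x)=1\}$ (assumed nonempty) and $Q_{\mathbb{A}}=\mathbb{R}\cup\{x: t(x)\in\mathbb{R},\ n(x)\in\mathbb{R},\ 4n(x)>t(x)^2\}$. Let $M$ be a real subspace with $\mathbb{R}\subsetneq M\subseteq Q_{\mathbb{A}}$ having a basis $(v_0,\dots,v_m)$, $m\ge1$, $v_0=1$, $v_s\in\mathbb{S}_{\mathbb{A}}$, $v_sv_t=-v_tv_s$ for distinct $s,t\ge1$; complete it to a basis of $\mathbb{A}$ with associated Euclidean norm. Identify $x=\sum x_sv_s\in M$ with $(x_0,\dots,x_m)\in\mathbb{R}^{m+1}$; differentiate componentwise. Fix $p\in\{0,\dots,m-1\}$, $q=m-p$; $\mathbf{x}=\mathbf{x}_p+\underline{\mathbf{x}}_q$ with $\mathbf{x}_p=\sum_{s=0}^px_sv_s\in\mathbb{R}^{p+1}$, $\underline{\mathbf{x}}_q=\sum_{s=p+1}^m x_sv_s$; $\mathbb{S}=\{\sum_{s=p+1}^m x_sv_s:\sum x_s^2=1\}$; $\underline{\mathbf{x}}_q=r\underline{\omega}$, $r=|\underline{\mathbf{x}}_q|$, $\underline{\omega}\in\mathbb{S}$;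 $\mathbf{x}'=(\mathbf{x}_p,r)$. $\Delta_{\mathbf{x}_p}=\sum_{s=0}^p\partial_{x_s}^2$, $\Delta_{\mathbf{x}}=\sum_{s=0}^m\partial_{x_s}^2$; $(\partial_r\frac1r)G$ means $\partial_r(G/r)$. For open $D$ invariant under the reflection, $\Omega_D=\{\mathbf{x}_p+r\underline{\omega}:(\mathbf{x}_p,r)\in D,\ r\ge0,\ \underline{\omega}\in\mathbb{S}\}$; a stem function $(F_1,F_2):D\to\mathbb{A}^2$ has $F_1$ even and $F_2$ odd in $r$ and induces $f(\mathbf{x}_p+r\underline{\omega})=F_1(\mathbf{x}')+\underline{\omega}F_2(\mathbf{x}')$. *)

theory Defs
  imports "HOL-Analysis.Analysis"
begin

text \<open>Real numbers c are identified with c *R one.\<close>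

definition associator :: "('a::real_vector \<Rightarrow> 'a \<Rightarrow> 'a) \<Rightarrow> 'a \<Rightarrow> 'a \<Rightarrow> 'a \<Rightarrow> 'a" where
  "associator mul a b c = mul (mul a b) c - mul a (mul b c)"

definition alt_algebra_invol ::
  "('a::real_vector \<Rightarrow> 'a \<Rightarrow> 'a) \<Rightarrow> 'a \<Rightarrow> ('a \<Rightarrow> 'a) \<Rightarrow> bool" where
  "alt_algebra_invol mul one cj \<longleftrightarrow>
     bilinear mul \<and>
     (\<forall>a. mul one a = a \<and> mul a one = a) \<and>
     (\<forall>a b. associator mul a a b = 0 \<and> associator mul a b a = 0 \<and> associator mul b a a = 0) \<and>
     linear cj \<and>
     (\<forall>c. cj (c *\<^sub>R one) = c *\<^sub>R one) \<and>
     (\<forall>a. cj (cj a) = a) \<and>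
     (\<forall>a b. cj (mul a b) = mul (cj b) (cj a))"

definition alg_t :: "('a::real_vector \<Rightarrow> 'a) \<Rightarrow> 'a \<Rightarrow> 'a" where
  "alg_t cj x = x + cj x"

definition alg_n :: "('a::real_vector \<Rightarrow> 'a \<Rightarrow> 'a) \<Rightarrow> ('a \<Rightarrow> 'a) \<Rightarrow> 'a \<Rightarrow> 'a" where
  "alg_n mul cj x = mul x (cj x)"

definition sphere_A :: "('a::real_vector \<Rightarrow> 'a \<Rightarrow> 'a) \<Rightarrow> 'a \<Rightarrow> ('a \<Rightarrow> 'a) \<Rightarrow> 'a set" where
  "sphere_A mul one cj = {x. alg_t cj x = 0 \<and> alg_n mul cj x = one}"

definition quadratic_cone :: "('a::real_vector \<Rightarrow> 'a \<Rightarrow> 'a) \<Rightarrow> 'a \<Rightarrow> ('a \<Rightarrow> 'a) \<Rightarrow> 'a set" where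
  "quadratic_cone mul one cj =
     range (\<lambda>c::real. c *\<^sub>R one) \<union>
     {x. \<exists>a b::real. alg_t cj x = a *\<^sub>R one \<and> alg_n mul cj x = b *\<^sub>R one \<and> 4 * b > a\<^sup>2}"

definition pderiv_dir :: "'n::real_normed_vector \<Rightarrow> ('n \<Rightarrow> 'a::real_normed_vector) \<Rightarrow> 'n \<Rightarrow> 'a" where
  "pderiv_dir b F x = vector_derivative (\<lambda>t. F (x + t *\<^sub>R b)) (at 0)"

definition laplacian :: "('n::euclidean_space \<Rightarrow> 'a::real_normed_vector) \<Rightarrow> 'n \<Rightarrow> 'a" where
  "laplacian F x = (\<Sum>b\<in>Basis. pderiv_dir b (pderiv_dir b F) x)"

definition C2_on :: "'n::euclidean_space set \<Rightarrow> ('n \<Rightarrow> 'a::real_normed_vector) \<Rightarrow> bool" where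
  "C2_on S F \<longleftrightarrow>
     (\<exists>F' F''. (\<forall>x\<in>S. (F has_derivative blinfun_apply (F' x)) (at x)) \<and>
               (\<forall>x\<in>S. (F' has_derivative blinfun_apply (F'' x)) (at x)) \<and>
               continuous_on S F'')"

definition d_r :: "('p \<times> real \<Rightarrow> 'a::real_normed_vector) \<Rightarrow> 'p::real_normed_vector \<times> real \<Rightarrow> 'a" where
  "d_r F = pderiv_dir ((0::'p), (1::real)) F"

end

theory Submission
  imports Defs
begin

text \<open>
  Off the axis \<open>r = 0\<close> we have \<open>f (x\<^sub>p, y) = F\<^sub>1 (x\<^sub>p, |y|) + L y \<cdot> (F\<^sub>2 / r) (x\<^sub>p, |y|)\<close>
  with \<open>L\<close> linear.  In the \<open>x\<^sub>p\<close>-directions \<open>f\<close> differentiates like \<open>F\<^sub>1 + \<omega> F\<^sub>2\<close>.  Along a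
  line \<open>y = r w + t b\<close> with \<open>|w| = |b| = 1\<close>, the radius \<open>\<rho> t = |y|\<close> satisfies
  \<open>\<rho>'(0) = w \<bullet> b\<close> and \<open>\<rho>''(0) = (1 - (w \<bullet> b)\<^sup>2) / r\<close>, so summing the second derivatives
  over an orthonormal basis \<open>b\<close> of the \<open>y\<close>-space produces \<open>\<partial>\<^sub>r\<^sup>2 + (q - 1)/r \<partial>\<^sub>r\<close> applied to
  \<open>F\<^sub>1\<close> and to \<open>F\<^sub>2 / r\<close>, together with the cross term \<open>2 \<omega> \<partial>\<^sub>r(F\<^sub>2 / r)\<close>; the identity
  \<open>\<partial>\<^sub>r\<^sup>2 F\<^sub>2 = 2 \<partial>\<^sub>r(F\<^sub>2 / r) + r \<partial>\<^sub>r\<^sup>2(F\<^sub>2 / r)\<close> then gives the formula.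
  On the axis both sides are continuous in \<open>r \<rightarrow> 0\<^sup>+\<close>: \<open>f\<close> is \<open>C\<^sup>2\<close>, and the quotient terms
  converge because \<open>\<partial>\<^sub>r F\<^sub>1\<close> and \<open>F\<^sub>2\<close> vanish at \<open>r = 0\<close> by evenness resp. oddness.
\<close>

section \<open>Directional derivatives along lines\<close>

lemma sum_Basis_prod:
  fixes g :: "'a::euclidean_space \<times> 'b::euclidean_space \<Rightarrow> 'c::comm_monoid_add"
  shows "(\<Sum>z\<in>Basis. g z) = (\<Sum>i\<in>Basis. g (i, 0)) + (\<Sum>j\<in>Basis. g (0, j))"
proof -
  have "inj_on (\<lambda>u. (u::'a, 0::'b)) Basis" "inj_on (\<lambda>u. (0::'a, u::'b)) Basis"
    by (auto intro!: inj_onI)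
  then show ?thesis
    unfolding Basis_prod_def by (subst sum.union_disjoint) (auto simp: sum.reindex)
qed

lemma has_vector_derivative_along_line:
  assumes "(F has_derivative F') (at (x + t *\<^sub>R b))"
  shows "((\<lambda>t. F (x + t *\<^sub>R b)) has_vector_derivative F' b) (at t)"
proof -
  have "((\<lambda>t. x + t *\<^sub>R b) has_derivative (\<lambda>s. s *\<^sub>R b)) (at t)"
    by (auto intro!: derivative_eq_intros)
  from has_derivative_compose[OF this assms] linear_scale[OF has_derivative_linear[OF assms]]
  show ?thesis
    by (simp add: has_vector_derivative_def o_def)
qed

lemma pderiv_dir_eqI:
  assumes "((\<lambda>s. F (x + s *\<^sub>R b)) has_vector_derivative c) (at t)"
  shows "pderiv_dir b F (x + t *\<^sub>R b) = c"
proof -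
  have "((\<lambda>s. F (x + s *\<^sub>R b)) \<circ> (\<lambda>s. t + s) has_vector_derivative (1::real) *\<^sub>R c) (at 0)"
    by (rule vector_diff_chain_at) (auto intro!: derivative_eq_intros assms)
  then have "((\<lambda>s. F ((x + t *\<^sub>R b) + s *\<^sub>R b)) has_vector_derivative c) (at 0)"
    by (simp add: o_def scaleR_add_left add.assoc)
  then show ?thesis
    unfolding pderiv_dir_def by (rule vector_derivative_at)
qed

lemma d_r_eqI:
  assumes "((\<lambda>s. G (xp, s)) has_vector_derivative c) (at r)"
  shows "d_r G (xp, r) = c"
  using pderiv_dir_eqI[of G "(xp, 0)" "(0, 1)" c r] assms by (simp add: d_r_def)

lemma line_derivatives_blinfun:
  fixes F :: "'n::euclidean_space \<Rightarrow> 'a::real_normed_vector"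
  assumes S: "open S" and x: "x + t *\<^sub>R b \<in> S"
    and d1: "\<And>y. y \<in> S \<Longrightarrow> (F has_derivative blinfun_apply (F' y)) (at y)"
    and d2: "\<And>y. y \<in> S \<Longrightarrow> (F' has_derivative blinfun_apply (F'' y)) (at y)"
  shows "((\<lambda>t. F (x + t *\<^sub>R b)) has_vector_derivative F' (x + t *\<^sub>R b) b) (at t)"
    and "((\<lambda>t. pderiv_dir b F (x + t *\<^sub>R b)) has_vector_derivative F'' (x + t *\<^sub>R b) b b) (at t)"
    and "pderiv_dir b F (x + t *\<^sub>R b) = F' (x + t *\<^sub>R b) b"
    and "pderiv_dir b (pderiv_dir b F) (x + t *\<^sub>R b) = F'' (x + t *\<^sub>R b) b b"
proof -
  have first: "((\<lambda>t. F (x + t *\<^sub>R b)) has_vector_derivative F' (x + t *\<^sub>R b) b) (at t)"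
    if "x + t *\<^sub>R b \<in> S" for t
    by (rule has_vector_derivative_along_line) (rule d1[OF that])
  then show "((\<lambda>t. F (x + t *\<^sub>R b)) has_vector_derivative F' (x + t *\<^sub>R b) b) (at t)"
    using x .
  have pd: "pderiv_dir b F (x + t *\<^sub>R b) = F' (x + t *\<^sub>R b) b" if "x + t *\<^sub>R b \<in> S" for t
    using pderiv_dir_eqI[OF first[OF that]] .
  then show "pderiv_dir b F (x + t *\<^sub>R b) = F' (x + t *\<^sub>R b) b"
    using x .
  have "((\<lambda>y. F' y b) has_derivative (\<lambda>h. F'' (x + t *\<^sub>R b) h b)) (at (x + t *\<^sub>R b))"
    by (rule bounded_linear.has_derivative[OF blinfun.bounded_linear_left d2[OF x]])
  from has_vector_derivative_along_line[OF this]
  show "((\<lambda>t. pderiv_dir b F (x + t *\<^sub>R b)) has_vector_derivative F'' (x + t *\<^sub>R b) b b) (at t)"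
  proof (rule has_vector_derivative_transform_within_open)
    show "open ((\<lambda>t. x + t *\<^sub>R b) -` S)"
      by (rule open_vimage[OF S]) (intro continuous_intros)
    show "t \<in> (\<lambda>t. x + t *\<^sub>R b) -` S"
      using x by simp
    show "F' (x + s *\<^sub>R b) b = pderiv_dir b F (x + s *\<^sub>R b)" if "s \<in> (\<lambda>t. x + t *\<^sub>R b) -` S" for s
      using pd that by simp
  qed
  then show "pderiv_dir b (pderiv_dir b F) (x + t *\<^sub>R b) = F'' (x + t *\<^sub>R b) b b"
    by (rule pderiv_dir_eqI)
qed

lemma C2_on_line_derivatives:
  fixes F :: "'n::euclidean_space \<Rightarrow> 'a::real_normed_vector"
  assumes S: "open S" and "C2_on S F" and x: "x + t *\<^sub>R b \<in> S"
  shows "((\<lambda>t. F (x + t *\<^sub>R b)) has_vector_derivative pderiv_dir b F (x + t *\<^sub>R b)) (at t)"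
    and "((\<lambda>t. pderiv_dir b F (x + t *\<^sub>R b)) has_vector_derivative
            pderiv_dir b (pderiv_dir b F) (x + t *\<^sub>R b)) (at t)"
proof -
  obtain F' F'' where "\<And>y. y \<in> S \<Longrightarrow> (F has_derivative blinfun_apply (F' y)) (at y)"
    and "\<And>y. y \<in> S \<Longrightarrow> (F' has_derivative blinfun_apply (F'' y)) (at y)"
    using assms(2) unfolding C2_on_def by blast
  from line_derivatives_blinfun[OF S x this]
  show "((\<lambda>t. F (x + t *\<^sub>R b)) has_vector_derivative pderiv_dir b F (x + t *\<^sub>R b)) (at t)"
    and "((\<lambda>t. pderiv_dir b F (x + t *\<^sub>R b)) has_vector_derivative
            pderiv_dir b (pderiv_dir b F) (x + t *\<^sub>R b)) (at t)"
    by simp_all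
qed

lemma C2_on_d_r:
  assumes "open S" "C2_on S F" "(xp, s) \<in> S"
  shows "((\<lambda>s. F (xp, s)) has_vector_derivative d_r F (xp, s)) (at s)"
    and "((\<lambda>s. d_r F (xp, s)) has_vector_derivative d_r (d_r F) (xp, s)) (at s)"
  using C2_on_line_derivatives[OF assms(1,2), of "(xp, 0)" s "(0, 1)"] assms(3)
  by (simp_all add: d_r_def)

lemma continuous_on_pderiv_dir_twice:
  fixes F :: "'n::euclidean_space \<Rightarrow> 'a::real_normed_vector"
  assumes S: "open S" and "C2_on S F"
  shows "continuous_on S (pderiv_dir b (pderiv_dir b F))"
proof -
  obtain F' F'' where d1: "\<And>y. y \<in> S \<Longrightarrow> (F has_derivative blinfun_apply (F' y)) (at y)"
    and d2: "\<And>y. y \<in> S \<Longrightarrow> (F' has_derivative blinfun_apply (F'' y)) (at y)"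
    and "continuous_on S F''"
    using assms(2) unfolding C2_on_def by blast
  have eq: "pderiv_dir b (pderiv_dir b F) y = F'' y b b" if "y \<in> S" for y
    using line_derivatives_blinfun(4)[of S y 0 b, OF S _ d1 d2] that by simp
  from \<open>continuous_on S F''\<close> have "continuous_on S (\<lambda>y. F'' y b b)"
    by (intro continuous_intros)
  then show ?thesis
    by (rule continuous_on_eq) (simp add: eq)
qed

lemma continuous_on_laplacian:
  fixes F :: "'n::euclidean_space \<Rightarrow> 'a::real_normed_vector"
  assumes "open S" "C2_on S F"
  shows "continuous_on S (laplacian F)"
  unfolding laplacian_def[abs_def]
  by (intro continuous_on_sum continuous_on_pderiv_dir_twice assms)

lemma tendsto_laplacian_C2:
  fixes F :: "'n::euclidean_space \<Rightarrow> 'a::real_normed_vector"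
  assumes "open S" "C2_on S F" "x \<in> S" "(g \<longlongrightarrow> x) net"
  shows "((\<lambda>s. laplacian F (g s)) \<longlongrightarrow> laplacian F x) net"
proof -
  have "isCont (laplacian F) x"
    using continuous_on_laplacian[OF assms(1,2)] assms(1,3) by (simp add: continuous_on_eq_continuous_at)
  then show ?thesis
    using assms(4) by (rule isCont_tendsto_compose)
qed

lemma laplacian_Pair_real:
  fixes F :: "'n::euclidean_space \<times> real \<Rightarrow> 'a::real_normed_vector"
  shows "laplacian F (x, r) = (\<Sum>i\<in>Basis. pderiv_dir (i, 0) (pderiv_dir (i, 0) F) (x, r)) + d_r (d_r F) (x, r)"
  by (simp add: laplacian_def sum_Basis_prod d_r_def)

lemma eventually_nhds_Pair_in_open:
  assumes "open S" "(x, y) \<in> S"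
  shows "\<forall>\<^sub>F y' in nhds y. (x, y') \<in> S"
proof -
  have "open ((\<lambda>y'. (x, y')) -` S)"
    by (rule open_vimage[OF assms(1)]) (intro continuous_intros)
  then show ?thesis
    using eventually_nhds_in_open assms(2) by fastforce
qed

lemma eventually_nhds_line_in_open:
  fixes x b :: "'a::real_normed_vector"
  assumes "open S" "x \<in> S"
  shows "\<forall>\<^sub>F t in nhds 0. x + t *\<^sub>R b \<in> S"
proof -
  have "open ((\<lambda>t. x + t *\<^sub>R b) -` S)"
    by (rule open_vimage[OF assms(1)]) (intro continuous_intros)
  then show ?thesis
    using eventually_nhds_in_open[of _ 0] assms(2) by force
qed

section \<open>Second derivatives along a line\<close>

lemma has_vector_derivative_at_cong_ev:
  assumes "\<forall>\<^sub>F s in nhds t. f s = g s"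
  shows "(f has_vector_derivative d) (at t) \<longleftrightarrow> (g has_vector_derivative d) (at t)"
  using has_vector_derivative_cong_ev[of UNIV f g t d] eventually_nhds_x_imp_x[OF assms] assms
  by simp

definition has_second_derivative_at :: "(real \<Rightarrow> 'a::real_normed_vector) \<Rightarrow> 'a \<Rightarrow> real \<Rightarrow> bool" where
  "has_second_derivative_at \<phi> c t0 \<longleftrightarrow>
     (\<exists>\<phi>'. (\<forall>\<^sub>F t in nhds t0. (\<phi> has_vector_derivative \<phi>' t) (at t)) \<and>
           (\<phi>' has_vector_derivative c) (at t0))"

lemma has_second_derivative_atI:
  assumes "\<forall>\<^sub>F t in nhds t0. (\<phi> has_vector_derivative \<phi>' t) (at t)"
    and "(\<phi>' has_vector_derivative c) (at t0)"
  shows "has_second_derivative_at \<phi> c t0"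
  using assms unfolding has_second_derivative_at_def by blast

lemma has_second_derivative_at_cong_ev:
  assumes "has_second_derivative_at \<phi> c t0" "\<forall>\<^sub>F t in nhds t0. \<phi> t = \<psi> t"
  shows "has_second_derivative_at \<psi> c t0"
proof -
  obtain \<phi>' where d1: "\<forall>\<^sub>F t in nhds t0. (\<phi> has_vector_derivative \<phi>' t) (at t)"
    and d2: "(\<phi>' has_vector_derivative c) (at t0)"
    using assms(1) unfolding has_second_derivative_at_def by blast
  have "\<forall>\<^sub>F t in nhds t0. \<forall>\<^sub>F s in nhds t. \<phi> s = \<psi> s"
    using assms(2) by (simp add: eventually_eventually)
  with d1 have "\<forall>\<^sub>F t in nhds t0. (\<psi> has_vector_derivative \<phi>' t) (at t)"
    by eventually_elim (simp add: has_vector_derivative_at_cong_ev)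
  then show ?thesis
    by (rule has_second_derivative_atI[OF _ d2])
qed

lemma has_second_derivative_at_add:
  assumes "has_second_derivative_at \<phi> c t0" "has_second_derivative_at \<psi> d t0"
  shows "has_second_derivative_at (\<lambda>t. \<phi> t + \<psi> t) (c + d) t0"
proof -
  obtain \<phi>' \<psi>' where \<phi>1: "\<forall>\<^sub>F t in nhds t0. (\<phi> has_vector_derivative \<phi>' t) (at t)"
    and \<psi>1: "\<forall>\<^sub>F t in nhds t0. (\<psi> has_vector_derivative \<psi>' t) (at t)"
    and \<phi>2: "(\<phi>' has_vector_derivative c) (at t0)" and \<psi>2: "(\<psi>' has_vector_derivative d) (at t0)"
    using assms unfolding has_second_derivative_at_def by blast
  show ?thesis
  proof (rule has_second_derivative_atI)
    show "\<forall>\<^sub>F t in nhds t0. ((\<lambda>t. \<phi> t + \<psi> t) has_vector_derivative \<phi>' t + \<psi>' t) (at t)"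
      using \<phi>1 \<psi>1 by eventually_elim (rule has_vector_derivative_add)
  qed (rule has_vector_derivative_add[OF \<phi>2 \<psi>2])
qed

lemma (in bounded_linear) has_second_derivative_at:
  assumes "has_second_derivative_at \<phi> c t0"
  shows "has_second_derivative_at (\<lambda>t. f (\<phi> t)) (f c) t0"
proof -
  obtain \<phi>' where d1: "\<forall>\<^sub>F t in nhds t0. (\<phi> has_vector_derivative \<phi>' t) (at t)"
    and d2: "(\<phi>' has_vector_derivative c) (at t0)"
    using assms unfolding has_second_derivative_at_def by blast
  show ?thesis
  proof (rule has_second_derivative_atI)
    show "\<forall>\<^sub>F t in nhds t0. ((\<lambda>t. f (\<phi> t)) has_vector_derivative f (\<phi>' t)) (at t)"
      using d1 by eventually_elim (rule has_vector_derivative)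
  qed (rule has_vector_derivative[OF d2])
qed

lemma (in bounded_bilinear) has_second_derivative_at_affine_left:
  assumes "has_second_derivative_at \<phi> c t0" "(\<phi> has_vector_derivative d) (at t0)"
  shows "has_second_derivative_at (\<lambda>t. prod (A + t *\<^sub>R B) (\<phi> t))
           (2 *\<^sub>R prod B d + prod (A + t0 *\<^sub>R B) c) t0"
proof -
  obtain \<phi>' where d1: "\<forall>\<^sub>F t in nhds t0. (\<phi> has_vector_derivative \<phi>' t) (at t)"
    and d2: "(\<phi>' has_vector_derivative c) (at t0)"
    using assms(1) unfolding has_second_derivative_at_def by blast
  have "\<phi>' t0 = d"
    using vector_derivative_unique_at[OF eventually_nhds_x_imp_x[OF d1] assms(2)] .
  have affine: "((\<lambda>t. A + t *\<^sub>R B) has_vector_derivative B) (at t)" for t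
    by (auto intro!: derivative_eq_intros)
  show ?thesis
  proof (rule has_second_derivative_atI)
    show "\<forall>\<^sub>F t in nhds t0. ((\<lambda>t. prod (A + t *\<^sub>R B) (\<phi> t)) has_vector_derivative
            prod (A + t *\<^sub>R B) (\<phi>' t) + prod B (\<phi> t)) (at t)"
      using d1 by eventually_elim (rule has_vector_derivative[OF affine])
    have "((\<lambda>t. prod (A + t *\<^sub>R B) (\<phi>' t) + prod B (\<phi> t)) has_vector_derivative
            (prod (A + t0 *\<^sub>R B) c + prod B (\<phi>' t0)) + (prod B d + prod 0 (\<phi> t0))) (at t0)"
      by (intro has_vector_derivative_add has_vector_derivative affine d2 assms(2)
          has_vector_derivative_const)
    then show "((\<lambda>t. prod (A + t *\<^sub>R B) (\<phi>' t) + prod B (\<phi> t)) has_vector_derivative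
            2 *\<^sub>R prod B d + prod (A + t0 *\<^sub>R B) c) (at t0)"
      by (simp add: \<open>\<phi>' t0 = d\<close> zero_left scaleR_2 algebra_simps)
  qed
qed

lemma pderiv_dir_twice_eqI:
  assumes "has_second_derivative_at (\<lambda>t. F (x + t *\<^sub>R b)) c 0"
  shows "pderiv_dir b (pderiv_dir b F) x = c"
proof -
  obtain \<phi>' where d1: "\<forall>\<^sub>F t in nhds 0. ((\<lambda>t. F (x + t *\<^sub>R b)) has_vector_derivative \<phi>' t) (at t)"
    and d2: "(\<phi>' has_vector_derivative c) (at 0)"
    using assms unfolding has_second_derivative_at_def by blast
  from d1 have "\<forall>\<^sub>F t in nhds 0. \<phi>' t = pderiv_dir b F (x + t *\<^sub>R b)"
    by eventually_elim (simp add: pderiv_dir_eqI)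
  then have "((\<lambda>t. pderiv_dir b F (x + t *\<^sub>R b)) has_vector_derivative c) (at 0)"
    using d2 by (simp add: has_vector_derivative_at_cong_ev)
  then show ?thesis
    using pderiv_dir_eqI[of "pderiv_dir b F" x b c 0] by simp
qed

lemma C2_on_has_second_derivative_at:
  fixes F :: "'n::euclidean_space \<Rightarrow> 'a::real_normed_vector"
  assumes S: "open S" "C2_on S F" and x: "x \<in> S"
  shows "has_second_derivative_at (\<lambda>t. F (x + t *\<^sub>R b)) (pderiv_dir b (pderiv_dir b F) x) 0"
proof (rule has_second_derivative_atI)
  show "\<forall>\<^sub>F t in nhds 0. ((\<lambda>t. F (x + t *\<^sub>R b)) has_vector_derivative pderiv_dir b F (x + t *\<^sub>R b)) (at t)"
    using eventually_nhds_line_in_open[OF S(1) x] by eventually_elim (rule C2_on_line_derivatives(1)[OF S])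
  show "((\<lambda>t. pderiv_dir b F (x + t *\<^sub>R b)) has_vector_derivative pderiv_dir b (pderiv_dir b F) x) (at 0)"
    using C2_on_line_derivatives(2)[OF S, of x 0 b] x by simp
qed

section \<open>Difference quotients at zero\<close>

lemma real_vector_eq_neg_self_iff: "(x :: 'a::real_vector) = - x \<longleftrightarrow> x = 0"
  by (simp add: eq_neg_iff_add_eq_0 scaleR_2[symmetric])

lemma even_has_vector_derivative_0:
  fixes h :: "real \<Rightarrow> 'a::real_normed_vector"
  assumes even: "\<forall>\<^sub>F s in nhds 0. h (- s) = h s" and d: "(h has_vector_derivative d) (at 0)"
  shows "d = 0"
proof -
  have "((h \<circ> uminus) has_vector_derivative (-1) *\<^sub>R d) (at 0)"
    by (rule vector_diff_chain_at) (auto intro!: derivative_eq_intros d)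
  then have "(h has_vector_derivative - d) (at 0)"
    using even by (simp add: o_def has_vector_derivative_at_cong_ev)
  with d have "d = - d"
    by (rule vector_derivative_unique_at)
  then show ?thesis
    by (simp add: real_vector_eq_neg_self_iff)
qed

lemma tendsto_quotient_at_0:
  fixes g :: "real \<Rightarrow> 'a::real_normed_vector"
  assumes "(g has_vector_derivative c) (at 0)" and "g 0 = 0"
  shows "((\<lambda>r. (1 / r) *\<^sub>R g r) \<longlongrightarrow> c) (at 0)"
proof -
  have lin: "((\<lambda>r. norm (g r - g 0 - (r - 0) *\<^sub>R c) / norm (r - 0)) \<longlongrightarrow> 0) (at 0)"
    using assms(1) unfolding has_vector_derivative_def has_derivative_iff_norm by blast
  have "norm (g r - g 0 - (r - 0) *\<^sub>R c) / norm (r - 0) = norm ((1 / r) *\<^sub>R g r - c)"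
    if "r \<noteq> 0" for r
  proof -
    have "(1 / r) *\<^sub>R g r - c = (1 / r) *\<^sub>R (g r - r *\<^sub>R c)"
      using that by (simp add: scaleR_diff_right)
    then show ?thesis
      using assms(2) by (simp add: divide_inverse mult.commute)
  qed
  then have "\<forall>\<^sub>F r in at 0. norm (g r - g 0 - (r - 0) *\<^sub>R c) / norm (r - 0) = norm ((1 / r) *\<^sub>R g r - c)"
    using eventually_neq_at_within[of 0 0 UNIV] by (auto elim: eventually_mono)
  with lin have "((\<lambda>r. norm ((1 / r) *\<^sub>R g r - c)) \<longlongrightarrow> 0) (at 0)"
    by (rule Lim_transform_eventually)
  then show ?thesis
    by (simp add: tendsto_norm_zero_iff LIM_zero_iff)
qed

lemma norm_le_square_if_derivative_small:
  fixes \<psi> e :: "real \<Rightarrow> 'a::real_normed_vector"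
  assumes d\<psi>: "\<And>s. \<bar>s\<bar> \<le> \<bar>r\<bar> \<Longrightarrow> (\<psi> has_vector_derivative s *\<^sub>R e s) (at s)"
    and e: "\<And>s. \<bar>s\<bar> \<le> \<bar>r\<bar> \<Longrightarrow> norm (e s) \<le> \<eta>" and \<psi>0: "\<psi> 0 = 0"
  shows "norm (\<psi> r) \<le> r\<^sup>2 * \<eta>"
proof -
  define \<psi>' where "\<psi>' s = s *\<^sub>R e s" for s
  have seg: "\<bar>s\<bar> \<le> \<bar>r\<bar>" if "s \<in> closed_segment 0 r" for s
    using that by (auto simp: closed_segment_eq_real_ivl split: if_splits)
  have "norm (\<psi> r - \<psi> 0 - (r - 0) *\<^sub>R \<psi>' 0) \<le> norm (r - 0) * (\<bar>r\<bar> * \<eta>)"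
  proof (rule vector_differentiable_bound_linearization[where S = "closed_segment 0 r"])
    fix s assume s: "s \<in> closed_segment 0 r"
    then show "(\<psi> has_vector_derivative \<psi>' s) (at s within closed_segment 0 r)"
      using d\<psi>[OF seg[OF s]] by (auto simp: \<psi>'_def intro: has_vector_derivative_at_within)
    have "0 \<le> \<eta>"
      using norm_ge_zero[of "e 0"] e[of 0] by linarith
    then show "norm (\<psi>' s - \<psi>' 0) \<le> \<bar>r\<bar> * \<eta>"
      using e[OF seg[OF s]] seg[OF s] by (auto simp: \<psi>'_def intro!: mult_mono)
  qed auto
  then show ?thesis
    using \<psi>0 by (simp add: \<psi>'_def power2_eq_square)
qed

lemma tendsto_quotient_square_at_0:
  fixes \<psi> e :: "real \<Rightarrow> 'a::real_normed_vector"
  assumes d\<psi>: "\<forall>\<^sub>F s in nhds 0. (\<psi> has_vector_derivative s *\<^sub>R e s) (at s)"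
    and e: "isCont e 0" "e 0 = 0" and \<psi>0: "\<psi> 0 = 0"
  shows "((\<lambda>r. (1 / r\<^sup>2) *\<^sub>R \<psi> r) \<longlongrightarrow> 0) (at 0)"
proof (rule tendstoI)
  fix \<epsilon> :: real
  assume "\<epsilon> > 0"
  define \<eta> where "\<eta> = \<epsilon> / 2"
  have "\<eta> > 0" and "\<eta> < \<epsilon>"
    using \<open>\<epsilon> > 0\<close> by (simp_all add: \<eta>_def)
  then have "\<forall>\<^sub>F s in nhds 0. norm (e s) < \<eta>"
    using tendstoD[OF e(1)[unfolded isCont_def]] e(2) by (simp add: eventually_nhds_conv_at dist_norm)
  with d\<psi> have "\<forall>\<^sub>F s in nhds 0. (\<psi> has_vector_derivative s *\<^sub>R e s) (at s) \<and> norm (e s) < \<eta>"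
    by (rule eventually_conj)
  then obtain \<delta> where "\<delta> > 0" and \<delta>: "\<And>s. \<bar>s\<bar> < \<delta> \<Longrightarrow>
      (\<psi> has_vector_derivative s *\<^sub>R e s) (at s) \<and> norm (e s) < \<eta>"
    unfolding eventually_nhds_metric by (auto simp: dist_real_def)
  have "norm ((1 / r\<^sup>2) *\<^sub>R \<psi> r) < \<epsilon>" if r0: "r \<noteq> 0" and r\<delta>: "\<bar>r\<bar> < \<delta>" for r
  proof -
    have "norm (\<psi> r) \<le> r\<^sup>2 * \<eta>"
    proof (rule norm_le_square_if_derivative_small[where e = e])
      show "(\<psi> has_vector_derivative s *\<^sub>R e s) (at s)" if "\<bar>s\<bar> \<le> \<bar>r\<bar>" for s
        using \<delta>[of s] that r\<delta> by simp
      show "norm (e s) \<le> \<eta>" if "\<bar>s\<bar> \<le> \<bar>r\<bar>" for s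
        using \<delta>[of s] that r\<delta> by simp
    qed (rule \<psi>0)
    then have "(1 / r\<^sup>2) * norm (\<psi> r) \<le> (1 / r\<^sup>2) * (r\<^sup>2 * \<eta>)"
      by (intro mult_left_mono) auto
    with r0 \<open>\<eta> < \<epsilon>\<close> show ?thesis
      by simp
  qed
  moreover have "\<forall>\<^sub>F r in at 0. r \<noteq> 0 \<and> \<bar>r\<bar> < \<delta>"
    using \<open>\<delta> > 0\<close> by (auto simp: eventually_at dist_real_def intro!: exI[of _ \<delta>])
  ultimately show "\<forall>\<^sub>F r in at 0. dist ((1 / r\<^sup>2) *\<^sub>R \<psi> r) 0 < \<epsilon>"
    by (auto simp: dist_norm elim!: eventually_mono)
qed

lemma tendsto_derivative_of_quotient_at_0:
  fixes h h1 h2 :: "real \<Rightarrow> 'a::real_normed_vector"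
  assumes dh: "\<forall>\<^sub>F s in nhds 0. (h has_vector_derivative h1 s) (at s)"
    and dh1: "\<forall>\<^sub>F s in nhds 0. (h1 has_vector_derivative h2 s) (at s)"
    and h2: "isCont h2 0" and h0: "h 0 = 0"
  shows "((\<lambda>r. (1 / r) *\<^sub>R h1 r - (1 / r\<^sup>2) *\<^sub>R h r) \<longlongrightarrow> (1 / 2) *\<^sub>R h2 0) (at 0)"
proof -
  txt \<open>The quotient is \<open>\<psi> r / r\<^sup>2 + h2 0 / 2\<close>, where \<open>\<psi>' r = r (h2 r - h2 0)\<close>.\<close>
  define \<psi> where "\<psi> s = s *\<^sub>R h1 s - h s - (s\<^sup>2 / 2) *\<^sub>R h2 0" for s
  have sq: "((\<lambda>s. (s\<^sup>2 / 2) *\<^sub>R h2 0) has_vector_derivative s *\<^sub>R h2 0) (at s)" for s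
    by (rule has_vector_derivative_eq_rhs) (auto intro!: derivative_eq_intros)
  have "\<forall>\<^sub>F s in nhds 0. (\<psi> has_vector_derivative s *\<^sub>R (h2 s - h2 0)) (at s)"
    using dh dh1
  proof eventually_elim
    case (elim s)
    have "(\<psi> has_vector_derivative (s *\<^sub>R h2 s + 1 *\<^sub>R h1 s) - h1 s - s *\<^sub>R h2 0) (at s)"
      unfolding \<psi>_def[abs_def]
      by (intro has_vector_derivative_diff has_vector_derivative_scaleR DERIV_ident elim sq)
    then show ?case
      by (simp add: scaleR_diff_right)
  qed
  then have "((\<lambda>r. (1 / r\<^sup>2) *\<^sub>R \<psi> r) \<longlongrightarrow> 0) (at 0)"
    by (rule tendsto_quotient_square_at_0) (simp_all add: \<psi>_def h0 h2)
  then have "((\<lambda>r. (1 / r\<^sup>2) *\<^sub>R \<psi> r + (1 / 2) *\<^sub>R h2 0) \<longlongrightarrow> 0 + (1 / 2) *\<^sub>R h2 0) (at 0)"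
    by (rule tendsto_add[OF _ tendsto_const])
  moreover have "\<forall>\<^sub>F r in at 0. (1 / r\<^sup>2) *\<^sub>R \<psi> r + (1 / 2) *\<^sub>R h2 0 = (1 / r) *\<^sub>R h1 r - (1 / r\<^sup>2) *\<^sub>R h r"
    using eventually_neq_at_within[of 0 0 UNIV]
    by eventually_elim (simp add: \<psi>_def scaleR_diff_right power2_eq_square)
  ultimately have "((\<lambda>r. (1 / r) *\<^sub>R h1 r - (1 / r\<^sup>2) *\<^sub>R h r) \<longlongrightarrow> 0 + (1 / 2) *\<^sub>R h2 0) (at 0)"
    by (rule Lim_transform_eventually)
  then show ?thesis
    by simp
qed

section \<open>Functions of the radius\<close>

lemma has_real_derivative_norm_line:
  fixes x b :: "'a::real_inner"
  assumes "x + t *\<^sub>R b \<noteq> 0"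
  shows "((\<lambda>t. norm (x + t *\<^sub>R b)) has_real_derivative ((x + t *\<^sub>R b) \<bullet> b) / norm (x + t *\<^sub>R b)) (at t)"
proof -
  have "((\<lambda>t. x + t *\<^sub>R b) has_derivative (\<lambda>s. s *\<^sub>R b)) (at t)"
    by (auto intro!: derivative_eq_intros)
  from has_derivative_compose[OF this has_derivative_norm[OF assms]]
  have "((\<lambda>t. norm (x + t *\<^sub>R b)) has_derivative (\<lambda>s. (s *\<^sub>R b) \<bullet> sgn (x + t *\<^sub>R b))) (at t)"
    by (simp add: o_def)
  moreover have "(\<lambda>s. (s *\<^sub>R b) \<bullet> sgn (x + t *\<^sub>R b)) = (*) (((x + t *\<^sub>R b) \<bullet> b) / norm (x + t *\<^sub>R b))"
    by (auto simp: sgn_div_norm inner_commute divide_inverse mult.commute)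
  ultimately show ?thesis
    unfolding has_field_derivative_def by simp
qed

lemma eventually_nhds_norm_line:
  fixes x b :: "'a::real_normed_vector"
  assumes "\<forall>\<^sub>F s in nhds (norm x). P s"
  shows "\<forall>\<^sub>F t in nhds 0. P (norm (x + t *\<^sub>R b))"
proof -
  have "isCont (\<lambda>t. norm (x + t *\<^sub>R b)) 0"
    by (intro continuous_intros)
  then have "((\<lambda>t. norm (x + t *\<^sub>R b)) \<longlongrightarrow> norm x) (nhds 0)"
    by (simp add: tendsto_nhds_iff isCont_def)
  with assms show ?thesis
    by (rule eventually_compose_filterlim)
qed

lemma norm_line_second_derivative:
  fixes w b :: "'a::real_inner"
  assumes w: "norm w = 1" and r: "r > 0"
  shows "((\<lambda>t. ((r *\<^sub>R w + t *\<^sub>R b) \<bullet> b) / norm (r *\<^sub>R w + t *\<^sub>R b)) has_real_derivative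
           (b \<bullet> b - (w \<bullet> b)\<^sup>2) / r) (at 0)"
proof -
  have "w \<noteq> 0"
    using w by auto
  then have "((\<lambda>t. norm (r *\<^sub>R w + t *\<^sub>R b)) has_real_derivative w \<bullet> b) (at 0)"
    using has_real_derivative_norm_line[of "r *\<^sub>R w" 0 b] w r by simp
  moreover have "norm (r *\<^sub>R w + 0 *\<^sub>R b) = r"
    using w r by simp
  ultimately have "((\<lambda>t. (r * (w \<bullet> b) + t * (b \<bullet> b)) / norm (r *\<^sub>R w + t *\<^sub>R b)) has_real_derivative
      ((b \<bullet> b) * r - (r * (w \<bullet> b) + 0 * (b \<bullet> b)) * (w \<bullet> b)) / (r * r)) (at 0)"
    using r by (auto intro!: derivative_eq_intros)
  moreover have "(\<lambda>t. ((r *\<^sub>R w + t *\<^sub>R b) \<bullet> b) / norm (r *\<^sub>R w + t *\<^sub>R b))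
      = (\<lambda>t. (r * (w \<bullet> b) + t * (b \<bullet> b)) / norm (r *\<^sub>R w + t *\<^sub>R b))"
    by (simp add: inner_add_left)
  moreover have "((b \<bullet> b) * r - (r * (w \<bullet> b) + 0 * (b \<bullet> b)) * (w \<bullet> b)) / (r * r)
      = (b \<bullet> b - (w \<bullet> b)\<^sup>2) / r"
    using r by (simp add: power2_eq_square field_simps)
  ultimately show ?thesis
    by simp
qed

lemma radial_line_derivatives:
  fixes h :: "real \<Rightarrow> 'a::real_normed_vector" and w b :: "'q::real_inner"
  assumes w: "norm w = 1" and b: "norm b = 1" and r: "r > 0"
    and dh: "\<forall>\<^sub>F s in nhds r. (h has_vector_derivative h1 s) (at s)"
    and dh1: "(h1 has_vector_derivative h2) (at r)"
  shows "((\<lambda>t. h (norm (r *\<^sub>R w + t *\<^sub>R b))) has_vector_derivative (w \<bullet> b) *\<^sub>R h1 r) (at 0)"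
    and "has_second_derivative_at (\<lambda>t. h (norm (r *\<^sub>R w + t *\<^sub>R b)))
           (((1 - (w \<bullet> b)\<^sup>2) / r) *\<^sub>R h1 r + (w \<bullet> b)\<^sup>2 *\<^sub>R h2) 0"
proof -
  define c where "c = w \<bullet> b"
  define \<rho> where "\<rho> t = norm (r *\<^sub>R w + t *\<^sub>R b)" for t
  define \<rho>' where "\<rho>' t = ((r *\<^sub>R w + t *\<^sub>R b) \<bullet> b) / \<rho> t" for t
  have \<rho>0: "\<rho> 0 = r" and \<rho>'0: "\<rho>' 0 = c"
    using w r by (simp_all add: \<rho>_def \<rho>'_def c_def)
  have d\<rho>: "(\<rho> has_vector_derivative \<rho>' t) (at t)" if "\<rho> t > 0" for t
    using has_real_derivative_norm_line[of "r *\<^sub>R w" t b] that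
    by (auto simp: \<rho>_def[abs_def] \<rho>'_def has_real_derivative_iff_has_vector_derivative)
  have "\<forall>\<^sub>F s in nhds (norm (r *\<^sub>R w)). s > 0 \<and> (h has_vector_derivative h1 s) (at s)"
    using eventually_conj[OF eventually_nhds_in_open[OF open_greaterThan] dh] r w by simp
  then have ev: "\<forall>\<^sub>F t in nhds 0. \<rho> t > 0 \<and> (h has_vector_derivative h1 (\<rho> t)) (at (\<rho> t))"
    unfolding \<rho>_def
    by (rule eventually_nhds_norm_line[where P = "\<lambda>s. s > 0 \<and> (h has_vector_derivative h1 s) (at s)"])
  have d1: "((\<lambda>t. h (\<rho> t)) has_vector_derivative \<rho>' t *\<^sub>R h1 (\<rho> t)) (at t)"
    if "\<rho> t > 0" and "(h has_vector_derivative h1 (\<rho> t)) (at (\<rho> t))" for t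
    using vector_diff_chain_at[OF d\<rho>[OF that(1)] that(2)] by (simp add: o_def)
  have "(\<rho>' has_real_derivative (1 - c\<^sup>2) / r) (at 0)"
    using norm_line_second_derivative[OF w r, of b] b
    by (simp add: \<rho>'_def[abs_def] \<rho>_def c_def dot_square_norm)
  moreover have "((\<lambda>t. h1 (\<rho> t)) has_vector_derivative c *\<^sub>R h2) (at 0)"
    using vector_diff_chain_at[OF d\<rho>[of 0]] dh1 \<rho>0 \<rho>'0 r by (simp add: o_def)
  ultimately have "((\<lambda>t. \<rho>' t *\<^sub>R h1 (\<rho> t)) has_vector_derivative
      \<rho>' 0 *\<^sub>R (c *\<^sub>R h2) + ((1 - c\<^sup>2) / r) *\<^sub>R h1 (\<rho> 0)) (at 0)"
    by (rule has_vector_derivative_scaleR)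
  then have "((\<lambda>t. \<rho>' t *\<^sub>R h1 (\<rho> t)) has_vector_derivative ((1 - c\<^sup>2) / r) *\<^sub>R h1 r + c\<^sup>2 *\<^sub>R h2) (at 0)"
    by (simp add: \<rho>0 \<rho>'0 power2_eq_square add.commute)
  moreover have "\<forall>\<^sub>F t in nhds 0. ((\<lambda>t. h (\<rho> t)) has_vector_derivative \<rho>' t *\<^sub>R h1 (\<rho> t)) (at t)"
    using ev by eventually_elim (simp add: d1)
  ultimately have "has_second_derivative_at (\<lambda>t. h (\<rho> t)) (((1 - c\<^sup>2) / r) *\<^sub>R h1 r + c\<^sup>2 *\<^sub>R h2) 0"
    by (intro has_second_derivative_atI)
  then show "has_second_derivative_at (\<lambda>t. h (norm (r *\<^sub>R w + t *\<^sub>R b)))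
           (((1 - (w \<bullet> b)\<^sup>2) / r) *\<^sub>R h1 r + (w \<bullet> b)\<^sup>2 *\<^sub>R h2) 0"
    by (simp add: \<rho>_def c_def)
  show "((\<lambda>t. h (norm (r *\<^sub>R w + t *\<^sub>R b))) has_vector_derivative (w \<bullet> b) *\<^sub>R h1 r) (at 0)"
    using d1[of 0] eventually_nhds_x_imp_x[OF ev] \<rho>0 \<rho>'0 by (simp add: \<rho>_def c_def)
qed

lemma sum_Basis_inner_square:
  fixes w :: "'a::euclidean_space"
  shows "(\<Sum>b\<in>Basis. (w \<bullet> b)\<^sup>2) = (norm w)\<^sup>2"
  by (simp add: euclidean_inner[of w w, symmetric] dot_square_norm power2_eq_square)

lemma sum_Basis_radial_coefficients:
  fixes w :: "'a::euclidean_space" and x y :: "'b::real_vector"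
  assumes "norm w = 1"
  shows "(\<Sum>b\<in>Basis. ((1 - (w \<bullet> b)\<^sup>2) / r) *\<^sub>R x + (w \<bullet> b)\<^sup>2 *\<^sub>R y)
    = ((real DIM('a) - 1) / r) *\<^sub>R x + y"
proof -
  have "(\<Sum>b\<in>Basis. ((1 - (w \<bullet> b)\<^sup>2) / r)) = (real DIM('a) - 1) / r"
    using assms by (simp add: sum_divide_distrib[symmetric] sum_subtractf sum_Basis_inner_square)
  moreover have "(\<Sum>b\<in>Basis. (w \<bullet> b)\<^sup>2) = 1"
    using assms by (simp add: sum_Basis_inner_square)
  ultimately show ?thesis
    by (simp add: sum.distrib scaleR_sum_left[symmetric])
qed

section \<open>Generalized partial-slice functions\<close>

locale partial_slice_function = bounded_bilinear mul
  for mul :: "'b::real_normed_vector \<Rightarrow> 'c::real_normed_vector \<Rightarrow> 'a::real_normed_vector" +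
  fixes L :: "'q::euclidean_space \<Rightarrow> 'b"
    and D :: "('p::euclidean_space \<times> real) set"
    and F1 :: "'p \<times> real \<Rightarrow> 'a" and F2 :: "'p \<times> real \<Rightarrow> 'c"
    and f :: "'p \<times> 'q \<Rightarrow> 'a"
  assumes linear_L: "linear L"
    and open_D: "open D"
    and F1_even: "\<And>xp r. (xp, r) \<in> D \<Longrightarrow> F1 (xp, - r) = F1 (xp, r)"
    and F2_odd: "\<And>xp r. (xp, r) \<in> D \<Longrightarrow> F2 (xp, - r) = - F2 (xp, r)"
    and C2_F1: "C2_on D F1" and C2_F2: "C2_on D F2"
    and C2_f: "C2_on {(xp, y). (xp, norm y) \<in> D} f"
    and f_eq: "\<And>xp r w. (xp, r) \<in> D \<Longrightarrow> 0 \<le> r \<Longrightarrow> norm w = 1 \<Longrightarrow>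
                 f (xp, r *\<^sub>R w) = F1 (xp, r) + mul (L w) (F2 (xp, r))"
begin

text \<open>\<open>L w\<close> is the imaginary unit \<open>\<omega>\<close> of the direction \<open>w\<close>, and \<open>d_r F2_div_r\<close> is the
  term \<open>(\<partial>\<^sub>r 1/r) F\<^sub>2\<close> of the formula.\<close>

abbreviation F2_div_r :: "'p \<times> real \<Rightarrow> 'c" where
  "F2_div_r z \<equiv> (1 / snd z) *\<^sub>R F2 z"

lemma eventually_nonzero_in_D:
  assumes "(xp, s) \<in> D" "s \<noteq> 0"
  shows "\<forall>\<^sub>F s' in nhds s. (xp, s') \<in> D \<and> s' \<noteq> 0"
  using eventually_nhds_Pair_in_open[OF open_delete[OF open_D], of xp s "(xp, 0)"] assms by simp

lemma F2_div_r_derivatives: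
  assumes xs: "(xp, s) \<in> D" and s: "s \<noteq> 0"
  shows "d_r F2_div_r (xp, s) = (1 / s) *\<^sub>R d_r F2 (xp, s) - (1 / s\<^sup>2) *\<^sub>R F2 (xp, s)"
    and "((\<lambda>s. F2_div_r (xp, s)) has_vector_derivative d_r F2_div_r (xp, s)) (at s)"
    and "((\<lambda>s. d_r F2_div_r (xp, s)) has_vector_derivative d_r (d_r F2_div_r) (xp, s)) (at s)"
proof -
  have quotient: "((\<lambda>s. (1 / s) *\<^sub>R F2 (xp, s)) has_vector_derivative
      (1 / s) *\<^sub>R d_r F2 (xp, s) - (1 / s\<^sup>2) *\<^sub>R F2 (xp, s)) (at s)"
    if "(xp, s) \<in> D" "s \<noteq> 0" for s
    by (rule has_vector_derivative_eq_rhs)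
      (auto intro!: derivative_eq_intros C2_on_d_r(1)[OF open_D C2_F2 that(1)]
        simp: that(2) power2_eq_square)
  then have eq: "d_r F2_div_r (xp, s) = (1 / s) *\<^sub>R d_r F2 (xp, s) - (1 / s\<^sup>2) *\<^sub>R F2 (xp, s)"
    if "(xp, s) \<in> D" "s \<noteq> 0" for s
    using that by (intro d_r_eqI) simp
  show "d_r F2_div_r (xp, s) = (1 / s) *\<^sub>R d_r F2 (xp, s) - (1 / s\<^sup>2) *\<^sub>R F2 (xp, s)"
    using eq[OF xs s] .
  show "((\<lambda>s. F2_div_r (xp, s)) has_vector_derivative d_r F2_div_r (xp, s)) (at s)"
    using quotient[OF xs s] by (simp add: eq[OF xs s])
  have inv: "((\<lambda>s. 1 / s) has_real_derivative - (1 / s\<^sup>2)) (at s)"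
    and inv2: "((\<lambda>s. 1 / s\<^sup>2) has_real_derivative - (2 / s ^ 3)) (at s)"
    using s by (auto intro!: derivative_eq_intros simp: power2_eq_square power3_eq_cube)
  obtain D2 where "((\<lambda>s. (1 / s) *\<^sub>R d_r F2 (xp, s) - (1 / s\<^sup>2) *\<^sub>R F2 (xp, s)) has_vector_derivative D2) (at s)"
    using has_vector_derivative_diff[OF has_vector_derivative_scaleR[OF inv C2_on_d_r(2)[OF open_D C2_F2 xs]]
        has_vector_derivative_scaleR[OF inv2 C2_on_d_r(1)[OF open_D C2_F2 xs]]] by blast
  moreover have "\<forall>\<^sub>F s' in nhds s.
      (1 / s') *\<^sub>R d_r F2 (xp, s') - (1 / s'\<^sup>2) *\<^sub>R F2 (xp, s') = d_r F2_div_r (xp, s')"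
    using eventually_nonzero_in_D[OF xs s] by eventually_elim (simp add: eq)
  ultimately have "((\<lambda>s. d_r F2_div_r (xp, s)) has_vector_derivative D2) (at s)"
    by (simp add: has_vector_derivative_at_cong_ev)
  moreover from this have "d_r (d_r F2_div_r) (xp, s) = D2"
    by (rule d_r_eqI)
  ultimately show "((\<lambda>s. d_r F2_div_r (xp, s)) has_vector_derivative d_r (d_r F2_div_r) (xp, s)) (at s)"
    by simp
qed

lemma d_r_d_r_F2_eq:
  assumes xr: "(xp, r) \<in> D" and r: "r \<noteq> 0"
  shows "d_r (d_r F2) (xp, r) = 2 *\<^sub>R d_r F2_div_r (xp, r) + r *\<^sub>R d_r (d_r F2_div_r) (xp, r)"
proof -
  have "\<forall>\<^sub>F s in nhds r. F2_div_r (xp, s) + s *\<^sub>R d_r F2_div_r (xp, s) = d_r F2 (xp, s)"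
    using eventually_nonzero_in_D[OF xr r]
    by eventually_elim (simp add: F2_div_r_derivatives(1) scaleR_diff_right power2_eq_square)
  moreover have "((\<lambda>s. F2_div_r (xp, s) + s *\<^sub>R d_r F2_div_r (xp, s)) has_vector_derivative
      d_r F2_div_r (xp, r) + (r *\<^sub>R d_r (d_r F2_div_r) (xp, r) + 1 *\<^sub>R d_r F2_div_r (xp, r))) (at r)"
    by (intro has_vector_derivative_add has_vector_derivative_scaleR DERIV_ident
        F2_div_r_derivatives(2,3)[OF xr r])
  ultimately have "((\<lambda>s. d_r F2 (xp, s)) has_vector_derivative
      d_r F2_div_r (xp, r) + (r *\<^sub>R d_r (d_r F2_div_r) (xp, r) + 1 *\<^sub>R d_r F2_div_r (xp, r))) (at r)"
    by (simp add: has_vector_derivative_at_cong_ev)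
  then have "d_r (d_r F2) (xp, r)
      = d_r F2_div_r (xp, r) + (r *\<^sub>R d_r (d_r F2_div_r) (xp, r) + 1 *\<^sub>R d_r F2_div_r (xp, r))"
    by (rule d_r_eqI)
  then show ?thesis
    by (simp add: scaleR_2)
qed

lemma tendsto_d_r_F1_quotient:
  assumes x0: "(xp, 0) \<in> D"
  shows "((\<lambda>r. (1 / r) *\<^sub>R d_r F1 (xp, r)) \<longlongrightarrow> d_r (d_r F1) (xp, 0)) (at 0)"
proof (rule tendsto_quotient_at_0)
  show "((\<lambda>r. d_r F1 (xp, r)) has_vector_derivative d_r (d_r F1) (xp, 0)) (at 0)"
    by (rule C2_on_d_r(2)[OF open_D C2_F1 x0])
  show "d_r F1 (xp, 0) = 0"
  proof (rule even_has_vector_derivative_0)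
    show "\<forall>\<^sub>F s in nhds 0. F1 (xp, - s) = F1 (xp, s)"
      using eventually_nhds_Pair_in_open[OF open_D x0] by eventually_elim (rule F1_even)
  qed (rule C2_on_d_r(1)[OF open_D C2_F1 x0])
qed

lemma tendsto_d_r_F2_div_r:
  assumes x0: "(xp, 0) \<in> D"
  shows "((\<lambda>r. d_r F2_div_r (xp, r)) \<longlongrightarrow> (1 / 2) *\<^sub>R d_r (d_r F2) (xp, 0)) (at 0)"
proof -
  have evD: "\<forall>\<^sub>F s in nhds 0. (xp, s) \<in> D"
    by (rule eventually_nhds_Pair_in_open[OF open_D x0])
  have "continuous_on D (d_r (d_r F2))"
    unfolding d_r_def by (rule continuous_on_pderiv_dir_twice[OF open_D C2_F2])
  then have "isCont (d_r (d_r F2)) (xp, 0)"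
    using open_D x0 by (simp add: continuous_on_eq_continuous_at)
  moreover have "isCont (\<lambda>s. (xp, s)) (0 :: real)"
    by (intro continuous_intros)
  ultimately have "isCont (\<lambda>s. d_r (d_r F2) (xp, s)) 0"
    using isCont_o2 by fastforce
  moreover have "F2 (xp, 0) = 0"
    using F2_odd[OF x0] by (simp add: real_vector_eq_neg_self_iff)
  ultimately have "((\<lambda>r. (1 / r) *\<^sub>R d_r F2 (xp, r) - (1 / r\<^sup>2) *\<^sub>R F2 (xp, r))
      \<longlongrightarrow> (1 / 2) *\<^sub>R d_r (d_r F2) (xp, 0)) (at 0)"
    using evD by (intro tendsto_derivative_of_quotient_at_0)
      (auto elim!: eventually_mono intro: C2_on_d_r[OF open_D C2_F2])
  moreover have "\<forall>\<^sub>F r in at 0. (1 / r) *\<^sub>R d_r F2 (xp, r) - (1 / r\<^sup>2) *\<^sub>R F2 (xp, r) = d_r F2_div_r (xp, r)"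
    using eventually_conj[OF evD[unfolded eventually_nhds_conv_at, THEN conjunct1]
        eventually_neq_at_within[of 0 0 UNIV]]
    by eventually_elim (simp add: F2_div_r_derivatives(1))
  ultimately show ?thesis
    by (rule Lim_transform_eventually)
qed

lemma pderiv_dir_twice_f_xp_direction:
  assumes xr: "(xp, r) \<in> D" and r: "0 < r" and w: "norm w = 1"
  shows "pderiv_dir (i, 0) (pderiv_dir (i, 0) f) (xp, r *\<^sub>R w) =
    pderiv_dir (i, 0) (pderiv_dir (i, 0) F1) (xp, r)
    + mul (L w) (pderiv_dir (i, 0) (pderiv_dir (i, 0) F2) (xp, r))"
proof (rule pderiv_dir_twice_eqI)
  have "has_second_derivative_at
      (\<lambda>t. F1 ((xp, r) + t *\<^sub>R (i, 0)) + mul (L w) (F2 ((xp, r) + t *\<^sub>R (i, 0))))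
      (pderiv_dir (i, 0) (pderiv_dir (i, 0) F1) (xp, r)
       + mul (L w) (pderiv_dir (i, 0) (pderiv_dir (i, 0) F2) (xp, r))) 0"
    by (intro has_second_derivative_at_add bounded_linear.has_second_derivative_at[OF bounded_linear_right]
        C2_on_has_second_derivative_at[OF open_D C2_F1 xr] C2_on_has_second_derivative_at[OF open_D C2_F2 xr])
  moreover have "\<forall>\<^sub>F t in nhds 0.
      F1 ((xp, r) + t *\<^sub>R (i, 0)) + mul (L w) (F2 ((xp, r) + t *\<^sub>R (i, 0))) = f ((xp, r *\<^sub>R w) + t *\<^sub>R (i, 0))"
    using eventually_nhds_line_in_open[OF open_D xr, of "(i, 0)"]
    by eventually_elim (use r w in \<open>simp add: f_eq\<close>)
  ultimately show "has_second_derivative_at (\<lambda>t. f ((xp, r *\<^sub>R w) + t *\<^sub>R (i, 0)))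
      (pderiv_dir (i, 0) (pderiv_dir (i, 0) F1) (xp, r)
       + mul (L w) (pderiv_dir (i, 0) (pderiv_dir (i, 0) F2) (xp, r))) 0"
    by (rule has_second_derivative_at_cong_ev)
qed

lemma f_on_y_line:
  assumes xr: "(xp, r) \<in> D" and r: "0 < r" and w: "norm w = 1"
  shows "\<forall>\<^sub>F t in nhds 0. F1 (xp, norm (r *\<^sub>R w + t *\<^sub>R b))
      + mul (r *\<^sub>R L w + t *\<^sub>R L b) (F2_div_r (xp, norm (r *\<^sub>R w + t *\<^sub>R b)))
    = f ((xp, r *\<^sub>R w) + t *\<^sub>R (0, b))"
proof -
  have "\<forall>\<^sub>F s in nhds (norm (r *\<^sub>R w)). (xp, s) \<in> D \<and> 0 < s"
    using eventually_conj[OF eventually_nhds_Pair_in_open[OF open_D xr]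
        eventually_nhds_in_open[OF open_greaterThan]] r w by simp
  then have "\<forall>\<^sub>F t in nhds 0. (\<lambda>s. (xp, s) \<in> D \<and> 0 < s) (norm (r *\<^sub>R w + t *\<^sub>R b))"
    by (rule eventually_nhds_norm_line)
  then show ?thesis
  proof eventually_elim
    case (elim t)
    define \<rho> where "\<rho> = norm (r *\<^sub>R w + t *\<^sub>R b)"
    define w' where "w' = (1 / \<rho>) *\<^sub>R (r *\<^sub>R w + t *\<^sub>R b)"
    have w': "norm w' = 1" "\<rho> *\<^sub>R w' = r *\<^sub>R w + t *\<^sub>R b"
      using elim by (simp_all add: w'_def \<rho>_def)
    have "L w' = (1 / \<rho>) *\<^sub>R (r *\<^sub>R L w + t *\<^sub>R L b)"
      by (simp add: w'_def linear_add[OF linear_L] linear_scale[OF linear_L])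
    then have "f (xp, r *\<^sub>R w + t *\<^sub>R b) = F1 (xp, \<rho>) + mul (r *\<^sub>R L w + t *\<^sub>R L b) (F2_div_r (xp, \<rho>))"
      using f_eq[of xp \<rho> w'] elim w' by (simp add: \<rho>_def scaleR_left scaleR_right)
    then show ?case
      by (simp add: \<rho>_def)
  qed
qed

lemma pderiv_dir_twice_f_y_direction:
  assumes xr: "(xp, r) \<in> D" and r: "0 < r" and w: "norm w = 1" and b: "norm b = 1"
  shows "pderiv_dir (0, b) (pderiv_dir (0, b) f) (xp, r *\<^sub>R w) =
    ((1 - (w \<bullet> b)\<^sup>2) / r) *\<^sub>R d_r F1 (xp, r) + (w \<bullet> b)\<^sup>2 *\<^sub>R d_r (d_r F1) (xp, r)
    + (2 *\<^sub>R mul (L b) ((w \<bullet> b) *\<^sub>R d_r F2_div_r (xp, r))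
       + mul (r *\<^sub>R L w) (((1 - (w \<bullet> b)\<^sup>2) / r) *\<^sub>R d_r F2_div_r (xp, r)
                          + (w \<bullet> b)\<^sup>2 *\<^sub>R d_r (d_r F2_div_r) (xp, r)))"
    (is "_ = ?value")
proof -
  have evD: "\<forall>\<^sub>F s in nhds r. (xp, s) \<in> D \<and> 0 < s"
    using eventually_conj[OF eventually_nhds_Pair_in_open[OF open_D xr]
        eventually_nhds_in_open[OF open_greaterThan]] r by simp
  have "\<forall>\<^sub>F s in nhds r. ((\<lambda>s. F1 (xp, s)) has_vector_derivative d_r F1 (xp, s)) (at s)"
    using evD by eventually_elim (simp add: C2_on_d_r(1)[OF open_D C2_F1])
  note radial_F1 = radial_line_derivatives[OF w b r this C2_on_d_r(2)[OF open_D C2_F1 xr]]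
  have "\<forall>\<^sub>F s in nhds r. ((\<lambda>s. F2_div_r (xp, s)) has_vector_derivative d_r F2_div_r (xp, s)) (at s)"
    using evD by eventually_elim (use F2_div_r_derivatives(2)[of xp] in auto)
  note radial_G = radial_line_derivatives[OF w b r this F2_div_r_derivatives(3)[OF xr]]
  have "has_second_derivative_at (\<lambda>t. F1 (xp, norm (r *\<^sub>R w + t *\<^sub>R b))
      + mul (r *\<^sub>R L w + t *\<^sub>R L b) (F2_div_r (xp, norm (r *\<^sub>R w + t *\<^sub>R b)))) ?value 0"
    using has_second_derivative_at_add[OF radial_F1(2)
        has_second_derivative_at_affine_left[OF radial_G(2,1), of "r *\<^sub>R L w" "L b"]] r
    by simp
  then have "has_second_derivative_at (\<lambda>t. f ((xp, r *\<^sub>R w) + t *\<^sub>R (0, b))) ?value 0"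
    by (rule has_second_derivative_at_cong_ev[OF _ f_on_y_line[OF xr r w]])
  then show ?thesis
    by (rule pderiv_dir_twice_eqI)
qed

lemma sum_Basis_inner_mul: "(\<Sum>b\<in>Basis. mul (L b) ((w \<bullet> b) *\<^sub>R k)) = mul (L w) k"
proof -
  have "L w = L (\<Sum>b\<in>Basis. (w \<bullet> b) *\<^sub>R b)"
    by (simp add: euclidean_representation)
  also have "\<dots> = (\<Sum>b\<in>Basis. (w \<bullet> b) *\<^sub>R L b)"
    by (simp add: linear_sum[OF linear_L] linear_scale[OF linear_L])
  finally show ?thesis
    by (simp add: sum_left scaleR_left scaleR_right)
qed

lemma laplacian_f_off_axis:
  assumes xr: "(xp, r) \<in> D" and r: "0 < r" and w: "norm w = 1"
  shows "laplacian f (xp, r *\<^sub>R w) = laplacian F1 (xp, r) + mul (L w) (laplacian F2 (xp, r))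
    + (real DIM('q) - 1) *\<^sub>R ((1 / r) *\<^sub>R d_r F1 (xp, r) + mul (L w) (d_r F2_div_r (xp, r)))"
proof -
  define q where "q = real DIM('q)"
  define a1 a2 k1 k2 where "a1 = d_r F1 (xp, r)" and "a2 = d_r (d_r F1) (xp, r)"
    and "k1 = d_r F2_div_r (xp, r)" and "k2 = d_r (d_r F2_div_r) (xp, r)"
  define P1 P2 where "P1 = (\<Sum>i\<in>Basis. pderiv_dir (i, 0) (pderiv_dir (i, 0) F1) (xp, r))"
    and "P2 = (\<Sum>i\<in>Basis. pderiv_dir (i, 0) (pderiv_dir (i, 0) F2) (xp, r))"
  have horizontal: "(\<Sum>i\<in>Basis. pderiv_dir (i, 0) (pderiv_dir (i, 0) f) (xp, r *\<^sub>R w))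
      = P1 + mul (L w) P2"
    by (simp add: pderiv_dir_twice_f_xp_direction[OF xr r w] sum.distrib sum_right P1_def P2_def)
  have "(\<Sum>b\<in>Basis. pderiv_dir (0, b) (pderiv_dir (0, b) f) (xp, r *\<^sub>R w))
      = (\<Sum>b\<in>Basis. ((1 - (w \<bullet> b)\<^sup>2) / r) *\<^sub>R a1 + (w \<bullet> b)\<^sup>2 *\<^sub>R a2
          + (2 *\<^sub>R mul (L b) ((w \<bullet> b) *\<^sub>R k1)
             + mul (r *\<^sub>R L w) (((1 - (w \<bullet> b)\<^sup>2) / r) *\<^sub>R k1 + (w \<bullet> b)\<^sup>2 *\<^sub>R k2)))"
    by (rule sum.cong) (simp_all add: pderiv_dir_twice_f_y_direction[OF xr r w] a1_def a2_def k1_def k2_def)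
  also have "\<dots> = (\<Sum>b\<in>Basis. ((1 - (w \<bullet> b)\<^sup>2) / r) *\<^sub>R a1 + (w \<bullet> b)\<^sup>2 *\<^sub>R a2)
        + 2 *\<^sub>R (\<Sum>b\<in>Basis. mul (L b) ((w \<bullet> b) *\<^sub>R k1))
        + mul (r *\<^sub>R L w) (\<Sum>b\<in>Basis. ((1 - (w \<bullet> b)\<^sup>2) / r) *\<^sub>R k1 + (w \<bullet> b)\<^sup>2 *\<^sub>R k2)"
    by (simp only: sum.distrib[symmetric] scaleR_sum_right sum_right add.assoc)
  also have "\<dots> = ((q - 1) / r) *\<^sub>R a1 + a2 + 2 *\<^sub>R mul (L w) k1
      + mul (r *\<^sub>R L w) (((q - 1) / r) *\<^sub>R k1 + k2)"
    by (simp only: sum_Basis_radial_coefficients[OF w] sum_Basis_inner_mul q_def)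
  also have "mul (r *\<^sub>R L w) (((q - 1) / r) *\<^sub>R k1 + k2) = (q - 1) *\<^sub>R mul (L w) k1 + r *\<^sub>R mul (L w) k2"
    using r by (simp add: scaleR_left add_right scaleR_right)
  finally have vertical: "(\<Sum>b\<in>Basis. pderiv_dir (0, b) (pderiv_dir (0, b) f) (xp, r *\<^sub>R w))
      = ((q - 1) / r) *\<^sub>R a1 + a2 + 2 *\<^sub>R mul (L w) k1 + ((q - 1) *\<^sub>R mul (L w) k1 + r *\<^sub>R mul (L w) k2)" .
  have lap_F1: "laplacian F1 (xp, r) = P1 + a2"
    by (simp add: laplacian_Pair_real P1_def a2_def)
  have lap_F2: "mul (L w) (laplacian F2 (xp, r)) = mul (L w) P2 + 2 *\<^sub>R mul (L w) k1 + r *\<^sub>R mul (L w) k2"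
    using d_r_d_r_F2_eq[OF xr] r by (simp add: laplacian_Pair_real P2_def k1_def k2_def add_right scaleR_right)
  have stem_terms: "(q - 1) *\<^sub>R ((1 / r) *\<^sub>R a1 + mul (L w) k1)
      = ((q - 1) / r) *\<^sub>R a1 + (q - 1) *\<^sub>R mul (L w) k1"
    by (simp add: scaleR_add_right)
  show ?thesis
    unfolding laplacian_def[of f] sum_Basis_prod horizontal vertical q_def[symmetric]
      a1_def[symmetric] k1_def[symmetric] lap_F1 lap_F2 stem_terms
    by (simp add: ac_simps)
qed

lemma laplacian_f_on_axis:
  assumes x0: "(xp, 0) \<in> D" and w: "norm w = 1"
  shows "laplacian f (xp, 0) = laplacian F1 (xp, 0) + mul (L w) (laplacian F2 (xp, 0))
    + (real DIM('q) - 1) *\<^sub>R (d_r (d_r F1) (xp, 0) + mul (L w) ((1 / 2) *\<^sub>R d_r (d_r F2) (xp, 0)))"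
    (is "_ = ?limit")
proof -
  let ?rhs = "\<lambda>s. laplacian F1 (xp, s) + mul (L w) (laplacian F2 (xp, s))
    + (real DIM('q) - 1) *\<^sub>R ((1 / s) *\<^sub>R d_r F1 (xp, s) + mul (L w) (d_r F2_div_r (xp, s)))"
  have "continuous_on UNIV (\<lambda>z :: 'p \<times> 'q. (fst z, norm (snd z)))"
    by (intro continuous_intros)
  from open_vimage[OF open_D this] have "open {(xp, y :: 'q). (xp, norm y) \<in> D}"
    by (simp add: vimage_def case_prod_unfold)
  moreover have "((\<lambda>s. (xp, s *\<^sub>R w)) \<longlongrightarrow> (xp, 0 *\<^sub>R w)) (at_right 0)"
    by (intro tendsto_intros)
  ultimately have lim_f: "((\<lambda>s. laplacian f (xp, s *\<^sub>R w)) \<longlongrightarrow> laplacian f (xp, 0)) (at_right 0)"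
    using x0 by (intro tendsto_laplacian_C2[OF _ C2_f]) simp_all
  have Pair: "((\<lambda>s. (xp, s)) \<longlongrightarrow> (xp, 0)) (at_right 0)"
    by (intro tendsto_intros)
  have "((\<lambda>s. (1 / s) *\<^sub>R d_r F1 (xp, s)) \<longlongrightarrow> d_r (d_r F1) (xp, 0)) (at_right 0)"
    and "((\<lambda>s. d_r F2_div_r (xp, s)) \<longlongrightarrow> (1 / 2) *\<^sub>R d_r (d_r F2) (xp, 0)) (at_right 0)"
    using tendsto_d_r_F1_quotient[OF x0] tendsto_d_r_F2_div_r[OF x0] by (simp_all add: filterlim_at_split)
  then have "(?rhs \<longlongrightarrow> ?limit) (at_right 0)"
    by (intro tendsto_add tendsto_scaleR tendsto_const tendsto
        tendsto_laplacian_C2[OF open_D C2_F1 x0 Pair] tendsto_laplacian_C2[OF open_D C2_F2 x0 Pair])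
  moreover have "\<forall>\<^sub>F s in at_right 0. ?rhs s = laplacian f (xp, s *\<^sub>R w)"
  proof -
    have "\<forall>\<^sub>F s in at_right 0. (xp, s) \<in> D"
      using eventually_nhds_Pair_in_open[OF open_D x0]
      by (simp add: eventually_nhds_conv_at eventually_at_split)
    with eventually_at_right_less[of 0] show ?thesis
      by eventually_elim (simp add: laplacian_f_off_axis w)
  qed
  ultimately have "((\<lambda>s. laplacian f (xp, s *\<^sub>R w)) \<longlongrightarrow> ?limit) (at_right 0)"
    by (rule Lim_transform_eventually)
  with lim_f show ?thesis
    by (rule tendsto_unique[OF trivial_limit_at_right_real])
qed

lemma laplacian_f:
  assumes xr: "(xp, r) \<in> D" and r: "0 \<le> r" and w: "norm w = 1"
  shows "laplacian f (xp, r *\<^sub>R w) = laplacian F1 (xp, r) + mul (L w) (laplacian F2 (xp, r))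
    + (real DIM('q) - 1) *\<^sub>R
        ((if r = 0 then d_r (d_r F1) (xp, 0) else (1 / r) *\<^sub>R d_r F1 (xp, r))
         + mul (L w) (if r = 0 then (1 / 2) *\<^sub>R d_r (d_r F2) (xp, 0) else d_r F2_div_r (xp, r)))"
proof (cases "r = 0")
  case True
  with laplacian_f_on_axis[of xp w] xr w show ?thesis
    by simp
next
  case False
  with laplacian_f_off_axis[OF xr _ w] r show ?thesis
    by simp
qed

end

theorem lemma4p2:
  fixes mul :: "'a::euclidean_space \<Rightarrow> 'a \<Rightarrow> 'a"
    and one :: 'a and cj :: "'a \<Rightarrow> 'a"
    and v :: "'p1::finite + 'q::finite \<Rightarrow> 'a"
    and i0 :: 'p1
    and D :: "((real, 'p1) vec \<times> real) set"
    and F1 F2 :: "(real, 'p1) vec \<times> real \<Rightarrow> 'a"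
    and f :: "(real, 'p1) vec \<times> (real, 'q) vec \<Rightarrow> 'a"
  assumes alg: "alt_algebra_invol mul one cj"
    and dim: "DIM('a) > 1"
    and sph_ne: "sphere_A mul one cj \<noteq> {}"
    and v_inj: "inj v" and v_indep: "independent (range v)"
    and v0: "v (Inl i0) = one"
    and v_sph: "\<And>s. s \<noteq> Inl i0 \<Longrightarrow> v s \<in> sphere_A mul one cj"
    and v_anti: "\<And>s t. s \<noteq> Inl i0 \<Longrightarrow> t \<noteq> Inl i0 \<Longrightarrow> s \<noteq> t \<Longrightarrow>
                   mul (v s) (v t) = - mul (v t) (v s)"
    and M_sub: "span (range v) \<subseteq> quadratic_cone mul one cj"
    and D_open: "open D"
    and D_refl: "\<And>xp r. (xp, r) \<in> D \<Longrightarrow> (xp, - r) \<in> D"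
    and F1_even: "\<And>xp r. (xp, r) \<in> D \<Longrightarrow> F1 (xp, - r) = F1 (xp, r)"
    and F2_odd: "\<And>xp r. (xp, r) \<in> D \<Longrightarrow> F2 (xp, - r) = - F2 (xp, r)"
    and F1_C2: "C2_on D F1" and F2_C2: "C2_on D F2"
    and f_def: "\<And>xp r w. (xp, r) \<in> D \<Longrightarrow> r \<ge> 0 \<Longrightarrow> norm w = 1 \<Longrightarrow>
                   f (xp, r *\<^sub>R w) = F1 (xp, r) + mul (\<Sum>j\<in>UNIV. w $ j *\<^sub>R v (Inr j)) (F2 (xp, r))"
    and f_C2: "C2_on {(xp, y). (xp, norm y) \<in> D} f"
  shows
    "(\<forall>xp. (xp, 0) \<in> D \<longrightarrow>
        ((\<lambda>r. (1 / r) *\<^sub>R d_r F1 (xp, r)) \<longlongrightarrow> d_r (d_r F1) (xp, 0)) (at 0) \<and>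
        ((\<lambda>r. d_r (\<lambda>z. (1 / snd z) *\<^sub>R F2 z) (xp, r)) \<longlongrightarrow> (1 / 2) *\<^sub>R d_r (d_r F2) (xp, 0)) (at 0))
     \<and>
     (\<forall>xp r w. (xp, r) \<in> D \<longrightarrow> r \<ge> 0 \<longrightarrow> norm w = 1 \<longrightarrow>
        (let om = (\<Sum>j\<in>UNIV. w $ j *\<^sub>R v (Inr j));
             T1 = (if r = 0 then d_r (d_r F1) (xp, 0) else (1 / r) *\<^sub>R d_r F1 (xp, r));
             T2 = (if r = 0 then (1 / 2) *\<^sub>R d_r (d_r F2) (xp, 0)
                   else d_r (\<lambda>z. (1 / snd z) *\<^sub>R F2 z) (xp, r))
         in laplacian f (xp, r *\<^sub>R w) =
              laplacian F1 (xp, r) + mul om (laplacian F2 (xp, r))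
              + (real CARD('q) - 1) *\<^sub>R (T1 + mul om T2)))"
proof -
  have "bounded_bilinear mul"
    using alg bilinear_conv_bounded_bilinear unfolding alt_algebra_invol_def by blast
  moreover have "linear (\<lambda>w :: (real, 'q) vec. \<Sum>j\<in>UNIV. w $ j *\<^sub>R v (Inr j))"
    by (rule linearI) (simp_all add: scaleR_add_left sum.distrib scaleR_sum_right)
  ultimately interpret partial_slice_function mul "\<lambda>w. \<Sum>j\<in>UNIV. w $ j *\<^sub>R v (Inr j)" D F1 F2 f
    using D_open F1_even F2_odd F1_C2 F2_C2 f_C2 f_def
    by (intro partial_slice_function.intro partial_slice_function_axioms.intro) simp_all
  show ?thesis
    using tendsto_d_r_F1_quotient tendsto_d_r_F2_div_r laplacian_f by (simp add: Let_def)
qed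

end
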